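(* The class $\mathbb{RBA}$ of all residuated basic algebras has the finite embeddability property: for every residuated basic algebra $\mathbf{A}$ and every finite subset $B$ of its universe, the partial subalgebra of $\mathbf{A}$ on $B$ embeds into some finite residuated basic algebra.
   Context: A residuated basic algebra (RBA) is an algebra $(\mathsf{A},\wedge,\vee,\top,\bot,\rightarrow,\leftarrow,\cdot)$ such that $(\mathsf{A},\wedge,\vee,\top,\bot)$ is a bounded distributive lattice with order $\le$ and for all $a,b,c$: $a\cdot b\le c$ iff $b\le a\rightarrow c$ iff $a\le c\leftarrow b$; $a\cdot\top\le a$; $\top\cdot a\le a$; $a\cdot b\le(a\cdot b)\cdot b$. The partial subalgebra on a finite $B\subseteq\mathsf{A}$ is $B$ with each operation of $\mathbf{A}$ restricted to those arguments in $B$ whose value lies in $B$ (constants included when they lie in $B$). An embedding of it into an algebra $\mathbf{C}$ is an injective map $h:B\to\mathbf{C}$ such that $h(f(b_1,\dots,b_k))=f^{\mathbf{C}}(h(b_1),\dots,h(b_k))$ whenever $f(b_1,\dots,b_k)$ is defined in the partial subalgebra. *)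

theory Defs
  imports Main
begin

text \<open>An algebra of signature (meet, join, top, bot, right residual, left residual, product),
  represented by a carrier set together with the operations.
  rarr a c is  a \<rightarrow> c  and  larr c b  is  c \<leftarrow> b.\<close>

record 'a rb_alg =
  carrier :: "'a set"
  meet :: "'a \<Rightarrow> 'a \<Rightarrow> 'a"
  join :: "'a \<Rightarrow> 'a \<Rightarrow> 'a"
  topel :: "'a"
  botel :: "'a"
  rarr :: "'a \<Rightarrow> 'a \<Rightarrow> 'a"
  larr :: "'a \<Rightarrow> 'a \<Rightarrow> 'a"
  mult :: "'a \<Rightarrow> 'a \<Rightarrow> 'a"

definition le :: "('a, 'b) rb_alg_scheme \<Rightarrow> 'a \<Rightarrow> 'a \<Rightarrow> bool" where
  "le A a b \<longleftrightarrow> meet A a b = a"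

definition bdd_distrib_lattice :: "('a, 'b) rb_alg_scheme \<Rightarrow> bool" where
  "bdd_distrib_lattice A \<longleftrightarrow>
     topel A \<in> carrier A \<and> botel A \<in> carrier A \<and>
     (\<forall>a\<in>carrier A. \<forall>b\<in>carrier A. meet A a b \<in> carrier A \<and> join A a b \<in> carrier A) \<and>
     (\<forall>a\<in>carrier A. \<forall>b\<in>carrier A.
        meet A a b = meet A b a \<and> join A a b = join A b a \<and>
        meet A a (join A a b) = a \<and> join A a (meet A a b) = a) \<and>
     (\<forall>a\<in>carrier A. \<forall>b\<in>carrier A. \<forall>c\<in>carrier A.
        meet A (meet A a b) c = meet A a (meet A b c) \<and>
        join A (join A a b) c = join A a (join A b c) \<and>
        meet A a (join A b c) = join A (meet A a b) (meet A a c)) \<and>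
     (\<forall>a\<in>carrier A. meet A a (topel A) = a \<and> join A a (botel A) = a)"

definition is_RBA :: "('a, 'b) rb_alg_scheme \<Rightarrow> bool" where
  "is_RBA A \<longleftrightarrow>
     bdd_distrib_lattice A \<and>
     (\<forall>a\<in>carrier A. \<forall>b\<in>carrier A.
        rarr A a b \<in> carrier A \<and> larr A a b \<in> carrier A \<and> mult A a b \<in> carrier A) \<and>
     (\<forall>a\<in>carrier A. \<forall>b\<in>carrier A. \<forall>c\<in>carrier A.
        (le A (mult A a b) c \<longleftrightarrow> le A b (rarr A a c)) \<and>
        (le A b (rarr A a c) \<longleftrightarrow> le A a (larr A c b))) \<and>
     (\<forall>a\<in>carrier A. le A (mult A a (topel A)) a \<and> le A (mult A (topel A) a) a) \<and>
     (\<forall>a\<in>carrier A. \<forall>b\<in>carrier A. le A (mult A a b) (mult A (mult A a b) b))"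

definition embeds_partial ::
  "('a, 'b) rb_alg_scheme \<Rightarrow> 'a set \<Rightarrow> ('c, 'd) rb_alg_scheme \<Rightarrow> ('a \<Rightarrow> 'c) \<Rightarrow> bool" where
  "embeds_partial A B C h \<longleftrightarrow>
     inj_on h B \<and> h ` B \<subseteq> carrier C \<and>
     (topel A \<in> B \<longrightarrow> h (topel A) = topel C) \<and>
     (botel A \<in> B \<longrightarrow> h (botel A) = botel C) \<and>
     (\<forall>a\<in>B. \<forall>b\<in>B.
        (meet A a b \<in> B \<longrightarrow> h (meet A a b) = meet C (h a) (h b)) \<and>
        (join A a b \<in> B \<longrightarrow> h (join A a b) = join C (h a) (h b)) \<and>
        (rarr A a b \<in> B \<longrightarrow> h (rarr A a b) = rarr C (h a) (h b)) \<and>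
        (larr A a b \<in> B \<longrightarrow> h (larr A a b) = larr C (h a) (h b)) \<and>
        (mult A a b \<in> B \<longrightarrow> h (mult A a b) = mult C (h a) (h b)))"

end

theory Submission
  imports Defs
begin

(* Let A be an RBA and B a finite subset of its carrier.
   1. In a bounded distributive lattice every finite set X lies in a finite bounded
      sublattice D: starting from {top, bot}, adjoining one element b to a finite
      sublattice D gives the finite sublattice of all (l1 meet b) join l2 with l1, l2 in D.
   2. In a finite bounded sublattice D every element x has a least upper approximation
      up D x in D and a greatest lower approximation dn D x in D.
   3. On D, keep the lattice operations of A, take up D (a * b) as product and
      dn D (a -> c), dn D (c <- b) as residuals.  Since up and dn are Galois-compatible
      with the order on D, residuation, the top-laws and the square law a*b <= (a*b)*b
      carry over, so this is a finite RBA; on B (a subset of D) the identity is an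
      embedding of the partial subalgebra, because up and dn fix elements of D.
   4. Transporting this finite algebra along an injection into nat yields the
      required algebra of type nat rb_alg. *)

section \<open>Bounded distributive lattices\<close>

locale distrib_lattice_alg =
  fixes A :: "('a, 'b) rb_alg_scheme"
  assumes lattice: "bdd_distrib_lattice A"
begin

lemma top_closed[simp]: "topel A \<in> carrier A"
  using lattice unfolding bdd_distrib_lattice_def by blast
lemma bot_closed[simp]: "botel A \<in> carrier A"
  using lattice unfolding bdd_distrib_lattice_def by blast
lemma meet_closed[simp]: "a \<in> carrier A \<Longrightarrow> b \<in> carrier A \<Longrightarrow> meet A a b \<in> carrier A"
  using lattice unfolding bdd_distrib_lattice_def by blast
lemma join_closed[simp]: "a \<in> carrier A \<Longrightarrow> b \<in> carrier A \<Longrightarrow> join A a b \<in> carrier A"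
  using lattice unfolding bdd_distrib_lattice_def by blast

lemma meet_comm: "a \<in> carrier A \<Longrightarrow> b \<in> carrier A \<Longrightarrow> meet A a b = meet A b a"
  using lattice unfolding bdd_distrib_lattice_def by blast
lemma join_comm: "a \<in> carrier A \<Longrightarrow> b \<in> carrier A \<Longrightarrow> join A a b = join A b a"
  using lattice unfolding bdd_distrib_lattice_def by blast
lemma meet_absorb: "a \<in> carrier A \<Longrightarrow> b \<in> carrier A \<Longrightarrow> meet A a (join A a b) = a"
  using lattice unfolding bdd_distrib_lattice_def by blast
lemma join_absorb: "a \<in> carrier A \<Longrightarrow> b \<in> carrier A \<Longrightarrow> join A a (meet A a b) = a"
  using lattice unfolding bdd_distrib_lattice_def by blast
lemma meet_assoc:
  "a \<in> carrier A \<Longrightarrow> b \<in> carrier A \<Longrightarrow> c \<in> carrier A \<Longrightarrow> meet A (meet A a b) c = meet A a (meet A b c)"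
  using lattice unfolding bdd_distrib_lattice_def by blast
lemma join_assoc:
  "a \<in> carrier A \<Longrightarrow> b \<in> carrier A \<Longrightarrow> c \<in> carrier A \<Longrightarrow> join A (join A a b) c = join A a (join A b c)"
  using lattice unfolding bdd_distrib_lattice_def by blast
lemma meet_join_distrib:
  "a \<in> carrier A \<Longrightarrow> b \<in> carrier A \<Longrightarrow> c \<in> carrier A \<Longrightarrow>
   meet A a (join A b c) = join A (meet A a b) (meet A a c)"
  using lattice unfolding bdd_distrib_lattice_def by blast
lemma meet_top: "a \<in> carrier A \<Longrightarrow> meet A a (topel A) = a"
  using lattice unfolding bdd_distrib_lattice_def by blast
lemma join_bot: "a \<in> carrier A \<Longrightarrow> join A a (botel A) = a"
  using lattice unfolding bdd_distrib_lattice_def by blast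

lemma meet_idem: "a \<in> carrier A \<Longrightarrow> meet A a a = a"
  by (metis meet_absorb join_absorb meet_closed)
lemma join_idem: "a \<in> carrier A \<Longrightarrow> join A a a = a"
  by (metis meet_absorb join_absorb join_closed)
lemma meet_left_comm:
  "a \<in> carrier A \<Longrightarrow> b \<in> carrier A \<Longrightarrow> c \<in> carrier A \<Longrightarrow> meet A a (meet A b c) = meet A b (meet A a c)"
  by (metis meet_assoc meet_comm)
lemma join_left_comm:
  "a \<in> carrier A \<Longrightarrow> b \<in> carrier A \<Longrightarrow> c \<in> carrier A \<Longrightarrow> join A a (join A b c) = join A b (join A a c)"
  by (metis join_assoc join_comm)
lemma join_meet_distrib_right:
  "a \<in> carrier A \<Longrightarrow> b \<in> carrier A \<Longrightarrow> c \<in> carrier A \<Longrightarrow>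
   meet A (join A b c) a = join A (meet A b a) (meet A c a)"
  by (metis meet_join_distrib meet_comm join_closed)

lemma le_refl: "a \<in> carrier A \<Longrightarrow> le A a a"
  by (simp add: le_def meet_idem)
lemma le_trans:
  "a \<in> carrier A \<Longrightarrow> b \<in> carrier A \<Longrightarrow> c \<in> carrier A \<Longrightarrow> le A a b \<Longrightarrow> le A b c \<Longrightarrow> le A a c"
  unfolding le_def by (metis meet_assoc)
lemma le_antisym: "a \<in> carrier A \<Longrightarrow> b \<in> carrier A \<Longrightarrow> le A a b \<Longrightarrow> le A b a \<Longrightarrow> a = b"
  unfolding le_def by (metis meet_comm)
lemma le_iff_join: "a \<in> carrier A \<Longrightarrow> b \<in> carrier A \<Longrightarrow> le A a b \<longleftrightarrow> join A a b = b"
  unfolding le_def by (metis meet_absorb join_absorb meet_comm join_comm)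
lemma meet_lower1: "a \<in> carrier A \<Longrightarrow> b \<in> carrier A \<Longrightarrow> le A (meet A a b) a"
  unfolding le_def by (simp add: meet_comm[of _ a] meet_assoc[symmetric] meet_idem)
lemma meet_lower2: "a \<in> carrier A \<Longrightarrow> b \<in> carrier A \<Longrightarrow> le A (meet A a b) b"
  by (metis meet_lower1 meet_comm)
lemma meet_greatest:
  "a \<in> carrier A \<Longrightarrow> b \<in> carrier A \<Longrightarrow> c \<in> carrier A \<Longrightarrow> le A c a \<Longrightarrow> le A c b \<Longrightarrow> le A c (meet A a b)"
  unfolding le_def by (metis meet_assoc)
lemma join_upper1: "a \<in> carrier A \<Longrightarrow> b \<in> carrier A \<Longrightarrow> le A a (join A a b)"
  unfolding le_def by (metis meet_absorb)
lemma join_upper2: "a \<in> carrier A \<Longrightarrow> b \<in> carrier A \<Longrightarrow> le A b (join A a b)"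
  by (metis join_upper1 join_comm)
lemma join_least:
  "a \<in> carrier A \<Longrightarrow> b \<in> carrier A \<Longrightarrow> c \<in> carrier A \<Longrightarrow> le A a c \<Longrightarrow> le A b c \<Longrightarrow> le A (join A a b) c"
  by (simp add: le_iff_join join_assoc)
lemma le_top: "a \<in> carrier A \<Longrightarrow> le A a (topel A)"
  by (simp add: le_def meet_top)
lemma bot_le: "a \<in> carrier A \<Longrightarrow> le A (botel A) a"
  by (metis le_iff_join join_bot join_comm bot_closed)

section \<open>Finite bounded sublattices\<close>

definition bounded_sublattice :: "'a set \<Rightarrow> bool" where
  "bounded_sublattice D \<longleftrightarrow> D \<subseteq> carrier A \<and> topel A \<in> D \<and> botel A \<in> D \<and>
     (\<forall>x\<in>D. \<forall>y\<in>D. meet A x y \<in> D \<and> join A x y \<in> D)"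

lemma bounded_sublattice_top_bot: "bounded_sublattice {topel A, botel A}"
proof -
  have "meet A (botel A) (topel A) = botel A" "meet A (topel A) (botel A) = botel A"
    "join A (botel A) (topel A) = topel A" "join A (topel A) (botel A) = topel A"
    using bot_le[of "topel A"] le_top[of "botel A"] le_iff_join[of "botel A" "topel A"]
    by (simp_all add: le_def meet_comm join_comm)
  then show ?thesis
    unfolding bounded_sublattice_def by (auto simp: meet_idem join_idem)
qed

text \<open>By distributivity, the meet and the join of two elements of the form (l1 meet b) join l2
  are again of that form; this is what keeps the adjunction of b finite.\<close>

lemma join_of_adjoined:
  assumes "l1 \<in> carrier A" "l2 \<in> carrier A" "l3 \<in> carrier A" "l4 \<in> carrier A" "b \<in> carrier A"
  shows "join A (join A (meet A l1 b) l2) (join A (meet A l3 b) l4) =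
    join A (meet A (join A l1 l3) b) (join A l2 l4)"
  using assms by (simp add: join_meet_distrib_right join_assoc join_left_comm)

lemma meet_of_adjoined:
  assumes c: "l1 \<in> carrier A" "l2 \<in> carrier A" "l3 \<in> carrier A" "l4 \<in> carrier A" "b \<in> carrier A"
  shows "meet A (join A (meet A l1 b) l2) (join A (meet A l3 b) l4) =
    join A (meet A (join A (join A (meet A l1 l3) (meet A l2 l3)) (meet A l1 l4)) b) (meet A l2 l4)"
proof -
  let ?p = "meet A l1 b" and ?q = "meet A l3 b"
  have "meet A (join A ?p l2) (join A ?q l4) =
      join A (meet A (join A ?p l2) ?q) (meet A (join A ?p l2) l4)"
    using c by (simp add: meet_join_distrib)
  also have "\<dots> = join A (join A (meet A ?p ?q) (meet A l2 ?q)) (join A (meet A ?p l4) (meet A l2 l4))"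
    using c by (simp add: join_meet_distrib_right)
  also have "meet A ?p ?q = meet A (meet A l1 l3) b"
    using c by (simp add: meet_assoc meet_left_comm meet_idem)
  also have "meet A l2 ?q = meet A (meet A l2 l3) b"
    using c by (simp add: meet_assoc)
  also have "meet A ?p l4 = meet A (meet A l1 l4) b"
    using c by (simp add: meet_assoc meet_comm meet_left_comm)
  finally show ?thesis
    using c by (simp add: join_meet_distrib_right join_assoc join_left_comm)
qed

lemma bounded_sublattice_adjoin:
  assumes D: "bounded_sublattice D" and b: "b \<in> carrier A"
  defines "D' \<equiv> (\<lambda>(l1, l2). join A (meet A l1 b) l2) ` (D \<times> D)"
  shows "bounded_sublattice D'" and "D \<subseteq> D'" and "b \<in> D'"
proof -
  have Dc: "D \<subseteq> carrier A" and top: "topel A \<in> D" and bot: "botel A \<in> D"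
    and closed: "\<And>x y. x \<in> D \<Longrightarrow> y \<in> D \<Longrightarrow> meet A x y \<in> D \<and> join A x y \<in> D"
    using D unfolding bounded_sublattice_def by blast+
  have in_D': "join A (meet A l1 b) l2 \<in> D'" if "l1 \<in> D" "l2 \<in> D" for l1 l2
    using that unfolding D'_def by force
  show "D \<subseteq> D'"
  proof
    fix x assume x: "x \<in> D"
    then have "join A (meet A (botel A) b) x = x"
      using Dc bot_le[OF b] join_bot join_comm unfolding le_def by (metis bot_closed subsetD)
    then show "x \<in> D'" using in_D'[OF bot x] by simp
  qed
  then have "topel A \<in> D'" "botel A \<in> D'" using top bot by blast+
  have "join A (meet A (topel A) b) (botel A) = b"
    using b by (simp add: meet_comm[of "topel A"] meet_top join_bot)
  then show "b \<in> D'" using in_D'[OF top bot] by simp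
  have "meet A x y \<in> D' \<and> join A x y \<in> D'" if "x \<in> D'" "y \<in> D'" for x y
  proof -
    obtain l1 l2 where x: "l1 \<in> D" "l2 \<in> D" "x = join A (meet A l1 b) l2"
      using \<open>x \<in> D'\<close> unfolding D'_def by auto
    obtain l3 l4 where y: "l3 \<in> D" "l4 \<in> D" "y = join A (meet A l3 b) l4"
      using \<open>y \<in> D'\<close> unfolding D'_def by auto
    have c: "l1 \<in> carrier A" "l2 \<in> carrier A" "l3 \<in> carrier A" "l4 \<in> carrier A"
      using x y Dc by auto
    show ?thesis
      unfolding x(3) y(3) meet_of_adjoined[OF c b] join_of_adjoined[OF c b]
      using x y by (intro conjI in_D') (meson closed)+
  qed
  moreover have "D' \<subseteq> carrier A"
    unfolding D'_def using Dc b by (auto intro!: join_closed meet_closed)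
  ultimately show "bounded_sublattice D'"
    using \<open>topel A \<in> D'\<close> \<open>botel A \<in> D'\<close> unfolding bounded_sublattice_def by blast
qed

lemma finite_bounded_sublattice_exists:
  assumes "finite X" "X \<subseteq> carrier A"
  shows "\<exists>D. finite D \<and> X \<subseteq> D \<and> bounded_sublattice D"
  using assms
proof (induction X rule: finite_induct)
  case empty
  show ?case using bounded_sublattice_top_bot by (intro exI[of _ "{topel A, botel A}"]) simp
next
  case (insert b X)
  have b: "b \<in> carrier A" and "X \<subseteq> carrier A" using insert.prems by auto
  then obtain D where D: "finite D" "X \<subseteq> D" "bounded_sublattice D" using insert.IH by blast
  define D' where "D' = (\<lambda>(l1, l2). join A (meet A l1 b) l2) ` (D \<times> D)"
  note adjoin = bounded_sublattice_adjoin[OF D(3) b, folded D'_def]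
  have "finite D'" using D(1) by (simp add: D'_def)
  moreover have "insert b X \<subseteq> D'" using adjoin(2,3) D(2) by blast
  ultimately show ?case using adjoin(1) by blast
qed

lemma finite_glb_in_sublattice:
  assumes D: "bounded_sublattice D"
  shows "finite S \<Longrightarrow> S \<noteq> {} \<Longrightarrow> S \<subseteq> D \<Longrightarrow>
    \<exists>m\<in>D. (\<forall>s\<in>S. le A m s) \<and> (\<forall>y\<in>carrier A. (\<forall>s\<in>S. le A y s) \<longrightarrow> le A y m)"
proof (induction S rule: finite_ne_induct)
  case (singleton x)
  then show ?case using D le_refl unfolding bounded_sublattice_def by auto
next
  case (insert x F)
  then obtain m where m: "m \<in> D" "\<forall>s\<in>F. le A m s"
    "\<forall>y\<in>carrier A. (\<forall>s\<in>F. le A y s) \<longrightarrow> le A y m" by auto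
  have Dc: "D \<subseteq> carrier A" and "meet A x m \<in> D"
    using D insert.prems m(1) unfolding bounded_sublattice_def by auto
  moreover have xc: "x \<in> carrier A" and mc: "m \<in> carrier A" using insert.prems m(1) Dc by auto
  moreover have "le A (meet A x m) s" if "s \<in> insert x F" for s
  proof (cases "s = x")
    case True
    then show ?thesis using meet_lower1 xc mc by simp
  next
    case False
    then have "le A m s" "s \<in> carrier A" using that m insert.prems Dc by auto
    then show ?thesis using le_trans[of "meet A x m" m s] meet_lower2[OF xc mc] xc mc by simp
  qed
  moreover have "le A y (meet A x m)" if "y \<in> carrier A" "\<forall>s\<in>insert x F. le A y s" for y
    using that meet_greatest xc mc m by auto
  ultimately show ?case by blast
qed

lemma finite_lub_in_sublattice:
  assumes D: "bounded_sublattice D"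
  shows "finite S \<Longrightarrow> S \<noteq> {} \<Longrightarrow> S \<subseteq> D \<Longrightarrow>
    \<exists>m\<in>D. (\<forall>s\<in>S. le A s m) \<and> (\<forall>y\<in>carrier A. (\<forall>s\<in>S. le A s y) \<longrightarrow> le A m y)"
proof (induction S rule: finite_ne_induct)
  case (singleton x)
  then show ?case using D le_refl unfolding bounded_sublattice_def by auto
next
  case (insert x F)
  then obtain m where m: "m \<in> D" "\<forall>s\<in>F. le A s m"
    "\<forall>y\<in>carrier A. (\<forall>s\<in>F. le A s y) \<longrightarrow> le A m y" by auto
  have Dc: "D \<subseteq> carrier A" and "join A x m \<in> D"
    using D insert.prems m(1) unfolding bounded_sublattice_def by auto
  moreover have xc: "x \<in> carrier A" and mc: "m \<in> carrier A" using insert.prems m(1) Dc by auto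
  moreover have "le A s (join A x m)" if "s \<in> insert x F" for s
  proof (cases "s = x")
    case True
    then show ?thesis using join_upper1 xc mc by simp
  next
    case False
    then have "le A s m" "s \<in> carrier A" using that m insert.prems Dc by auto
    then show ?thesis using le_trans[of s m "join A x m"] join_upper2[OF xc mc] xc mc by simp
  qed
  moreover have "le A (join A x m) y" if "y \<in> carrier A" "\<forall>s\<in>insert x F. le A s y" for y
    using that join_least xc mc m by auto
  ultimately show ?case by blast
qed

text \<open>Upper and lower approximation of an element by elements of a sublattice D:
  up D x is the least element of D above x, dn D x the greatest element of D below x.\<close>

definition up :: "'a set \<Rightarrow> 'a \<Rightarrow> 'a" where
  "up D x = (SOME m. m \<in> D \<and> (\<forall>d\<in>D. le A m d \<longleftrightarrow> le A x d))"

definition dn :: "'a set \<Rightarrow> 'a \<Rightarrow> 'a" where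
  "dn D x = (SOME m. m \<in> D \<and> (\<forall>d\<in>D. le A d m \<longleftrightarrow> le A d x))"

lemma up_prop:
  assumes D: "bounded_sublattice D" "finite D" and x: "x \<in> carrier A"
  shows "up D x \<in> D \<and> (\<forall>d\<in>D. le A (up D x) d \<longleftrightarrow> le A x d)"
proof -
  let ?U = "{d\<in>D. le A x d}"
  have Dc: "D \<subseteq> carrier A" and "topel A \<in> D" using D unfolding bounded_sublattice_def by blast+
  then have "?U \<noteq> {}" using le_top x by auto
  then obtain m where m: "m \<in> D" "\<forall>s\<in>?U. le A m s" "\<forall>y\<in>carrier A. (\<forall>s\<in>?U. le A y s) \<longrightarrow> le A y m"
    using finite_glb_in_sublattice[OF D(1), of ?U] D(2) by auto
  have xm: "le A x m" using m(3) x by auto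
  have "le A m d \<longleftrightarrow> le A x d" if d: "d \<in> D" for d
    using m(2) d le_trans[of x m d] x xm m(1) Dc by blast
  with m(1) have "m \<in> D \<and> (\<forall>d\<in>D. le A m d \<longleftrightarrow> le A x d)" by blast
  then show ?thesis unfolding up_def by (rule someI)
qed

lemma dn_prop:
  assumes D: "bounded_sublattice D" "finite D" and x: "x \<in> carrier A"
  shows "dn D x \<in> D \<and> (\<forall>d\<in>D. le A d (dn D x) \<longleftrightarrow> le A d x)"
proof -
  let ?L = "{d\<in>D. le A d x}"
  have Dc: "D \<subseteq> carrier A" and "botel A \<in> D" using D unfolding bounded_sublattice_def by blast+
  then have "?L \<noteq> {}" using bot_le x by auto
  then obtain m where m: "m \<in> D" "\<forall>s\<in>?L. le A s m" "\<forall>y\<in>carrier A. (\<forall>s\<in>?L. le A s y) \<longrightarrow> le A m y"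
    using finite_lub_in_sublattice[OF D(1), of ?L] D(2) by auto
  have mx: "le A m x" using m(3) x by auto
  have "le A d m \<longleftrightarrow> le A d x" if d: "d \<in> D" for d
    using m(2) d le_trans[of d m x] x mx m(1) Dc by blast
  with m(1) have "m \<in> D \<and> (\<forall>d\<in>D. le A d m \<longleftrightarrow> le A d x)" by blast
  then show ?thesis unfolding dn_def by (rule someI)
qed

lemma up_fixes:
  assumes D: "bounded_sublattice D" "finite D" and x: "x \<in> D"
  shows "up D x = x"
proof -
  have xc: "x \<in> carrier A" using D x unfolding bounded_sublattice_def by blast
  note u = up_prop[OF D xc]
  have uc: "up D x \<in> carrier A" using D u unfolding bounded_sublattice_def by blast
  show ?thesis using u x le_refl[OF xc] le_refl[OF uc] le_antisym[OF uc xc] by blast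
qed

lemma dn_fixes:
  assumes D: "bounded_sublattice D" "finite D" and x: "x \<in> D"
  shows "dn D x = x"
proof -
  have xc: "x \<in> carrier A" using D x unfolding bounded_sublattice_def by blast
  note u = dn_prop[OF D xc]
  have uc: "dn D x \<in> carrier A" using D u unfolding bounded_sublattice_def by blast
  show ?thesis using u x le_refl[OF xc] le_refl[OF uc] le_antisym[OF uc xc] by blast
qed

end

section \<open>Residuated basic algebras and their finite approximations\<close>

locale rba =
  fixes A :: "('a, 'b) rb_alg_scheme"
  assumes rba: "is_RBA A"

sublocale rba \<subseteq> distrib_lattice_alg A
  using rba unfolding is_RBA_def by unfold_locales blast

context rba
begin

lemma mult_closed[simp]: "a \<in> carrier A \<Longrightarrow> b \<in> carrier A \<Longrightarrow> mult A a b \<in> carrier A"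
  using rba unfolding is_RBA_def by blast
lemma rarr_closed[simp]: "a \<in> carrier A \<Longrightarrow> b \<in> carrier A \<Longrightarrow> rarr A a b \<in> carrier A"
  using rba unfolding is_RBA_def by blast
lemma larr_closed[simp]: "a \<in> carrier A \<Longrightarrow> b \<in> carrier A \<Longrightarrow> larr A a b \<in> carrier A"
  using rba unfolding is_RBA_def by blast

lemma residuation_right:
  "a \<in> carrier A \<Longrightarrow> b \<in> carrier A \<Longrightarrow> c \<in> carrier A \<Longrightarrow> le A (mult A a b) c \<longleftrightarrow> le A b (rarr A a c)"
  using rba unfolding is_RBA_def by blast
lemma residuation_left:
  "a \<in> carrier A \<Longrightarrow> b \<in> carrier A \<Longrightarrow> c \<in> carrier A \<Longrightarrow> le A b (rarr A a c) \<longleftrightarrow> le A a (larr A c b)"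
  using rba unfolding is_RBA_def by blast
lemma mult_top_le: "a \<in> carrier A \<Longrightarrow> le A (mult A a (topel A)) a \<and> le A (mult A (topel A) a) a"
  using rba unfolding is_RBA_def by blast
lemma square_law: "a \<in> carrier A \<Longrightarrow> b \<in> carrier A \<Longrightarrow> le A (mult A a b) (mult A (mult A a b) b)"
  using rba unfolding is_RBA_def by blast

lemma mult_mono_left:
  assumes c: "x \<in> carrier A" "y \<in> carrier A" "b \<in> carrier A" and xy: "le A x y"
  shows "le A (mult A x b) (mult A y b)"
proof -
  have "le A y (larr A (mult A y b) b)"
    using residuation_right[of y b "mult A y b"] residuation_left[of y b "mult A y b"] c le_refl by simp
  then have "le A x (larr A (mult A y b) b)" using le_trans[OF c(1) c(2)] xy c by simp
  then show ?thesis
    using residuation_right[of x b "mult A y b"] residuation_left[of x b "mult A y b"] c by simp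
qed

definition approx_alg :: "'a set \<Rightarrow> 'a rb_alg" where
  "approx_alg D = \<lparr>carrier = D, meet = meet A, join = join A, topel = topel A, botel = botel A,
     rarr = \<lambda>a c. dn D (rarr A a c), larr = \<lambda>c b. dn D (larr A c b),
     mult = \<lambda>a b. up D (mult A a b)\<rparr>"

lemma approx_alg_simps:
  "carrier (approx_alg D) = D" "meet (approx_alg D) = meet A" "join (approx_alg D) = join A"
  "topel (approx_alg D) = topel A" "botel (approx_alg D) = botel A"
  "rarr (approx_alg D) = (\<lambda>a c. dn D (rarr A a c))" "larr (approx_alg D) = (\<lambda>c b. dn D (larr A c b))"
  "mult (approx_alg D) = (\<lambda>a b. up D (mult A a b))"
  by (simp_all add: approx_alg_def)

lemma le_approx_alg[simp]: "le (approx_alg D) = le A"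
  by (simp add: approx_alg_def le_def[abs_def])

lemma approx_alg_lattice:
  assumes "bounded_sublattice D"
  shows "bdd_distrib_lattice (approx_alg D)"
proof -
  have "D \<subseteq> carrier A" using assms unfolding bounded_sublattice_def by blast
  then show ?thesis
    using assms lattice unfolding bdd_distrib_lattice_def bounded_sublattice_def approx_alg_simps
    by (meson subsetD)
qed

text \<open>The square law a*b <= (a*b)*b survives rounding the product up into D, because the
  product is monotone in its left argument.\<close>

lemma approx_square_law:
  assumes D: "bounded_sublattice D" "finite D" and "a \<in> D" "b \<in> D"
  shows "le A (up D (mult A a b)) (up D (mult A (up D (mult A a b)) b))"
proof -
  have c: "\<And>x. x \<in> D \<Longrightarrow> x \<in> carrier A" using D unfolding bounded_sublattice_def by blast
  note upp = up_prop[OF D]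
  let ?u = "up D (mult A a b)"
  let ?v = "up D (mult A ?u b)"
  have ab: "a \<in> carrier A" "b \<in> carrier A" using assms(3,4) c by auto
  have u: "?u \<in> D" "le A (mult A a b) ?u" using upp[of "mult A a b"] ab le_refl c by auto
  have uc: "?u \<in> carrier A" using u c by auto
  have v: "?v \<in> D" "le A (mult A ?u b) ?v" using upp[of "mult A ?u b"] ab uc le_refl c by auto
  have "le A (mult A a b) (mult A (mult A a b) b)" using square_law ab by simp
  moreover have "le A (mult A (mult A a b) b) (mult A ?u b)" using mult_mono_left u uc ab by simp
  ultimately have "le A (mult A a b) (mult A ?u b)"
    using le_trans[of "mult A a b" "mult A (mult A a b) b" "mult A ?u b"] ab uc by simp
  then have "le A (mult A a b) ?v"
    using le_trans[of "mult A a b" "mult A ?u b" ?v] v ab uc c by simp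
  then show ?thesis using upp[of "mult A a b"] v ab by simp
qed

text \<open>Rounding up the
  product and rounding down the residuals preserves residuation, since up D x <= d iff x <= d
  and d <= dn D x iff d <= x for all d in D.\<close>

lemma approx_alg_RBA:
  assumes D: "bounded_sublattice D" "finite D"
  shows "is_RBA (approx_alg D)"
proof -
  have c: "\<And>x. x \<in> D \<Longrightarrow> x \<in> carrier A" using D unfolding bounded_sublattice_def by blast
  note upp = up_prop[OF D] and dnp = dn_prop[OF D]
  have closed: "dn D (rarr A a b) \<in> D \<and> dn D (larr A a b) \<in> D \<and> up D (mult A a b) \<in> D"
    if "a \<in> D" "b \<in> D" for a b
    using that upp dnp c by simp
  have residuation:
    "(le A (up D (mult A a b)) d \<longleftrightarrow> le A b (dn D (rarr A a d))) \<and>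
     (le A b (dn D (rarr A a d)) \<longleftrightarrow> le A a (dn D (larr A d b)))"
    if "a \<in> D" "b \<in> D" "d \<in> D" for a b d
  proof -
    have "le A (up D (mult A a b)) d \<longleftrightarrow> le A (mult A a b) d"
      using upp[of "mult A a b"] c that by simp
    moreover have "le A b (dn D (rarr A a d)) \<longleftrightarrow> le A b (rarr A a d)"
      using dnp[of "rarr A a d"] c that by simp
    moreover have "le A a (dn D (larr A d b)) \<longleftrightarrow> le A a (larr A d b)"
      using dnp[of "larr A d b"] c that by simp
    ultimately show ?thesis using residuation_right residuation_left c that by simp
  qed
  have top_law: "le A (up D (mult A a (topel A))) a \<and> le A (up D (mult A (topel A) a)) a"
    if "a \<in> D" for a
    using upp[of "mult A a (topel A)"] upp[of "mult A (topel A) a"] mult_top_le[of a] c that by simp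
  show ?thesis
    unfolding is_RBA_def le_approx_alg approx_alg_simps
    using approx_alg_lattice[OF D(1)] closed residuation top_law approx_square_law[OF D] by auto
qed

text \<open>On a subset B of D the identity embeds the partial subalgebra of A into the
  finite approximation: whenever an operation of A maps B into B, its value already lies
  in D, so rounding does not change it.\<close>

lemma approx_alg_embeds:
  assumes D: "bounded_sublattice D" "finite D" and "B \<subseteq> D"
  shows "embeds_partial A B (approx_alg D) id"
  using assms up_fixes[OF D] dn_fixes[OF D]
  unfolding embeds_partial_def approx_alg_simps bounded_sublattice_def by auto

lemma finite_approximation:
  assumes "finite B" "B \<subseteq> carrier A"
  shows "\<exists>D. finite D \<and> is_RBA (approx_alg D) \<and> embeds_partial A B (approx_alg D) id"
proof -
  obtain D where D: "finite D" "B \<subseteq> D" "bounded_sublattice D"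
    using finite_bounded_sublattice_exists[OF assms] by blast
  then show ?thesis using approx_alg_RBA[OF D(3,1)] approx_alg_embeds[OF D(3,1,2)] by blast
qed

end

section \<open>Transport along an injection\<close>

definition transport :: "('c \<Rightarrow> 'e) \<Rightarrow> ('c, 'd) rb_alg_scheme \<Rightarrow> 'e rb_alg" where
  "transport f C = (let g = inv_into (carrier C) f in
     \<lparr>carrier = f ` carrier C,
      meet = \<lambda>x y. f (meet C (g x) (g y)), join = \<lambda>x y. f (join C (g x) (g y)),
      topel = f (topel C), botel = f (botel C),
      rarr = \<lambda>x y. f (rarr C (g x) (g y)), larr = \<lambda>x y. f (larr C (g x) (g y)),
      mult = \<lambda>x y. f (mult C (g x) (g y))\<rparr>)"

lemma transport_simps:
  "carrier (transport f C) = f ` carrier C" "topel (transport f C) = f (topel C)"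
  "botel (transport f C) = f (botel C)"
  by (simp_all add: transport_def Let_def)

lemma transport_ops:
  assumes "inj_on f (carrier C)" "a \<in> carrier C" "b \<in> carrier C"
  shows "meet (transport f C) (f a) (f b) = f (meet C a b)"
    "join (transport f C) (f a) (f b) = f (join C a b)"
    "rarr (transport f C) (f a) (f b) = f (rarr C a b)"
    "larr (transport f C) (f a) (f b) = f (larr C a b)"
    "mult (transport f C) (f a) (f b) = f (mult C a b)"
  using assms by (simp_all add: transport_def Let_def)

lemma transport_RBA:
  assumes R: "is_RBA C" and inj: "inj_on f (carrier C)"
  shows "is_RBA (transport f C)"
proof -
  interpret rba C by (rule rba.intro[OF R])
  have eq: "\<And>x y. x \<in> carrier C \<Longrightarrow> y \<in> carrier C \<Longrightarrow> f x = f y \<longleftrightarrow> x = y"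
    using inj_on_eq_iff[OF inj] by blast
  have le_transport: "le (transport f C) (f a) (f b) \<longleftrightarrow> le C a b"
    if "a \<in> carrier C" "b \<in> carrier C" for a b
    unfolding le_def using that transport_ops[OF inj that] eq by simp
  have "is_RBA (transport f C) \<longleftrightarrow> is_RBA C"
    unfolding is_RBA_def bdd_distrib_lattice_def transport_simps
    by (simp add: transport_ops[OF inj] le_transport eq)
  then show ?thesis using R by simp
qed

lemma transport_embeds:
  assumes h: "embeds_partial A B C h" and inj: "inj_on f (carrier C)"
  shows "embeds_partial A B (transport f C) (f \<circ> h)"
proof -
  have hB: "inj_on h B" "h ` B \<subseteq> carrier C" using h unfolding embeds_partial_def by blast+
  then have hc: "\<And>a. a \<in> B \<Longrightarrow> h a \<in> carrier C" by blast
  have "inj_on (f \<circ> h) B" using comp_inj_on[OF hB(1) inj_on_subset[OF inj hB(2)]] .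
  moreover have "(f \<circ> h) ` B \<subseteq> f ` carrier C" using hB by auto
  moreover have
    "(meet A a b \<in> B \<longrightarrow> f (h (meet A a b)) = meet (transport f C) (f (h a)) (f (h b))) \<and>
     (join A a b \<in> B \<longrightarrow> f (h (join A a b)) = join (transport f C) (f (h a)) (f (h b))) \<and>
     (rarr A a b \<in> B \<longrightarrow> f (h (rarr A a b)) = rarr (transport f C) (f (h a)) (f (h b))) \<and>
     (larr A a b \<in> B \<longrightarrow> f (h (larr A a b)) = larr (transport f C) (f (h a)) (f (h b))) \<and>
     (mult A a b \<in> B \<longrightarrow> f (h (mult A a b)) = mult (transport f C) (f (h a)) (f (h b)))"
    if "a \<in> B" "b \<in> B" for a b
    using h that transport_ops[OF inj hc[OF that(1)] hc[OF that(2)]]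
    unfolding embeds_partial_def by simp
  ultimately show ?thesis
    using h unfolding embeds_partial_def transport_simps by simp
qed

theorem mainTheorem5:
  fixes A :: "'a rb_alg" and B :: "'a set"
  assumes "is_RBA A" and "finite B" and "B \<subseteq> carrier A"
  shows "\<exists>(C :: nat rb_alg) h. is_RBA C \<and> finite (carrier C) \<and> embeds_partial A B C h"
proof -
  have R: "rba A" by (rule rba.intro[OF assms(1)])
  obtain D where D: "finite D" "is_RBA (rba.approx_alg A D)"
    "embeds_partial A B (rba.approx_alg A D) id"
    using rba.finite_approximation[OF R assms(2,3)] by blast
  let ?F = "rba.approx_alg A D"
  obtain f :: "'a \<Rightarrow> nat" where "inj_on f D"
    using finite_imp_inj_to_nat_seg[OF D(1)] by blast
  then have inj: "inj_on f (carrier ?F)" by (simp add: rba.approx_alg_simps[OF R])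
  have "is_RBA (transport f ?F)"
    using transport_RBA[OF D(2) inj] .
  moreover have "finite (carrier (transport f ?F))"
    using D(1) by (simp add: transport_simps rba.approx_alg_simps[OF R])
  moreover have "embeds_partial A B (transport f ?F) (f \<circ> id)"
    using transport_embeds[OF D(3) inj] .
  ultimately show ?thesis by (intro exI conjI)
qed

end
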